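(* Let $(X_n)_{n\ge1}$ be i.i.d. nonnegative random variables with $\mathbb{P}(X_1=0)<1$ and $\mathbb{E}[X_1]<\infty$, let $T_0=0$, $T_n=X_1+\dots+X_n$, $N_t=\sum_{j\ge1}\mathbf{1}_{T_j\le t}$ and let $A_t=t-T_{N_t}$ be the age of this renewal process. Let $(C_i)_{i\ge1}$ be i.i.d. copies of a random variable $C$ with $\mathbb{P}(C>0)=1$ and $\mathbb{E}[C^2]<\infty$, $D_0=0$, $D_n=C_1+\dots+C_n$, and $\underline{B}(s)=\sup\{n\ge0: D_n\le s\}$ for $s\ge 0$. Then $\underline{B}(A_t)/\sqrt{t}$ converges in probability to $0$ as $t\to\infty$. *)

theory Defs
  imports "HOL-Probability.Probability"
begin

definition partial_sum :: "(nat \<Rightarrow> 'a \<Rightarrow> real) \<Rightarrow> nat \<Rightarrow> 'a \<Rightarrow> real" where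
  "partial_sum Y n \<omega> = (\<Sum>j\<in>{1..n}. Y j \<omega>)"

definition renewal_count :: "(nat \<Rightarrow> 'a \<Rightarrow> real) \<Rightarrow> real \<Rightarrow> 'a \<Rightarrow> nat" where
  "renewal_count X t \<omega> = card {j. 1 \<le> j \<and> partial_sum X j \<omega> \<le> t}"

definition renewal_age :: "(nat \<Rightarrow> 'a \<Rightarrow> real) \<Rightarrow> real \<Rightarrow> 'a \<Rightarrow> real" where
  "renewal_age X t \<omega> = t - partial_sum X (renewal_count X t \<omega>) \<omega>"

definition lower_count :: "(nat \<Rightarrow> 'a \<Rightarrow> real) \<Rightarrow> real \<Rightarrow> 'a \<Rightarrow> nat" where
  "lower_count C s \<omega> = Sup {n. partial_sum C n \<omega> \<le> s}"

end

theory Submission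
  imports Defs
begin

text \<open>
  Because the steps of X are integrable, the age is tight uniformly in t: if A_t > a, then some
  renewal epoch T_n lies in a window of length h at distance k h + a below t and the next step
  exceeds a + k h. The expected number of epochs in a window of length h is bounded, so
  P(A_t > a) \<le> const \<cdot> E[X_1; X_1 > a], which tends to 0. By a Chernoff bound the sums D_m grow
  linearly, P(D_m \<le> c m) \<le> \<rho>^m with \<rho> < 1. As B(A_t) > m forces D_m \<le> A_t, we get
  P(B(A_t) > m) \<le> P(A_t > c m) + \<rho>^m uniformly in t, and m = \<lfloor>\<epsilon> \<surd>t\<rfloor> gives the claim.
\<close>

section \<open>Partial sums, counting functions and the age\<close>

lemma partial_sum_0 [simp]: "partial_sum Y 0 w = 0"
  unfolding partial_sum_def by simp

lemma partial_sum_Suc: "partial_sum Y (Suc n) w = partial_sum Y n w + Y (Suc n) w"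
  unfolding partial_sum_def by (simp add: add.commute)

lemma partial_sum_mono:
  assumes "\<And>j. j \<ge> 1 \<Longrightarrow> Y j w \<ge> 0" and "n \<le> n'"
  shows "partial_sum Y n w \<le> partial_sum Y n' w"
  unfolding partial_sum_def using assms by (intro sum_mono2) auto

lemma partial_sum_le_of_less_lower_count:
  assumes nonneg: "\<And>j. j \<ge> 1 \<Longrightarrow> C j w \<ge> 0" and less: "m < lower_count C s w"
  shows "partial_sum C m w \<le> s"
proof -
  define S where "S = {n. partial_sum C n w \<le> s}"
  have "\<exists>n\<ge>m. n \<in> S"
  proof (cases "finite S")
    case True
    have "lower_count C s w = Sup S" by (simp add: lower_count_def S_def)
    with less True have "S \<noteq> {}" "m < Max S" by (auto simp: Sup_nat_def split: if_splits)
    with True show ?thesis by (intro exI[of _ "Max S"]) auto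
  next
    case False
    then show ?thesis unfolding finite_nat_set_iff_bounded_le by (meson nat_le_linear)
  qed
  then obtain n where "m \<le> n" "partial_sum C n w \<le> s" unfolding S_def by auto
  with partial_sum_mono[of C w, OF nonneg] show ?thesis by (meson order.trans)
qed

lemma renewal_age_last_epoch:
  fixes X :: "nat \<Rightarrow> 'a \<Rightarrow> real"
  assumes nonneg: "\<And>j. j \<ge> 1 \<Longrightarrow> X j w \<ge> 0" and "t \<ge> 0"
    and unbounded: "\<exists>j. partial_sum X j w > t"
  obtains N where "renewal_age X t w = t - partial_sum X N w" "partial_sum X (Suc N) w > t"
proof -
  define T where "T j = partial_sum X j w" for j
  have mono: "i \<le> j \<Longrightarrow> T i \<le> T j" for i j
    unfolding T_def by (rule partial_sum_mono[of X w, OF nonneg])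
  define n0 where "n0 = (LEAST j. T j > t)"
  have n0: "T n0 > t"
    unfolding n0_def using unbounded LeastI_ex[of "\<lambda>j. T j > t"] by (auto simp: T_def)
  have before_n0: "T j \<le> t \<longleftrightarrow> j < n0" for j
  proof
    assume "T j \<le> t"
    show "j < n0"
    proof (rule ccontr)
      assume "\<not> j < n0"
      then have "T n0 \<le> T j" by (intro mono) simp
      with n0 \<open>T j \<le> t\<close> show False by simp
    qed
  next
    assume "j < n0"
    then show "T j \<le> t" using not_less_Least[of j "\<lambda>j. T j > t"] by (simp add: n0_def)
  qed
  have "n0 \<ge> 1" using n0 \<open>t \<ge> 0\<close> by (cases n0) (simp_all add: T_def)
  have "{j. 1 \<le> j \<and> partial_sum X j w \<le> t} = {1..<n0}"
    by (auto simp: before_n0[unfolded T_def])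
  then have "renewal_count X t w = n0 - 1" by (simp add: renewal_count_def)
  then show thesis
    using n0 \<open>n0 \<ge> 1\<close> by (intro that[of "n0 - 1"]) (simp_all add: renewal_age_def T_def)
qed

text \<open>Witness: n = N_t, and k is the index of the window containing T_{N_t} < t - a.\<close>
lemma renewal_age_gt_imp_long_step:
  fixes X :: "nat \<Rightarrow> 'a \<Rightarrow> real"
  assumes nonneg: "\<And>j. j \<ge> 1 \<Longrightarrow> X j w \<ge> 0" and "t \<ge> 0" "a \<ge> 0" "h > 0"
    and unbounded: "\<exists>j. partial_sum X j w > t" and age: "renewal_age X t w > a"
  shows "\<exists>n k. k < nat \<lfloor>t / h\<rfloor> + 1 \<and>
      partial_sum X n w \<in> {t - a - real (Suc k) * h <.. t - a - real k * h} \<and>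
      X (Suc n) w > a + real k * h"
proof -
  obtain N where age_eq: "renewal_age X t w = t - partial_sum X N w"
    and step: "partial_sum X N w + X (Suc N) w > t"
    using renewal_age_last_epoch[OF nonneg \<open>t \<ge> 0\<close> unbounded] by (metis partial_sum_Suc)
  define T where "T = partial_sum X N w"
  have "T \<ge> 0" using partial_sum_mono[of X w 0 N, OF nonneg] by (simp add: T_def)
  define k where "k = nat \<lfloor>(t - a - T) / h\<rfloor>"
  have "(t - a - T) / h > 0" using age age_eq \<open>h > 0\<close> by (simp add: T_def)
  then have "real k = of_int \<lfloor>(t - a - T) / h\<rfloor>" by (simp add: k_def)
  then have "real k \<le> (t - a - T) / h" "(t - a - T) / h < real k + 1" by linarith+
  then have k_le: "real k * h \<le> t - a - T" and k_gt: "t - a - T < (real k + 1) * h"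
    using \<open>h > 0\<close> by (simp_all add: field_simps)
  have "(t - a - T) / h \<le> t / h" using \<open>T \<ge> 0\<close> \<open>a \<ge> 0\<close> \<open>h > 0\<close> by (simp add: divide_right_mono)
  with \<open>real k \<le> (t - a - T) / h\<close> have "k < nat \<lfloor>t / h\<rfloor> + 1"
    by (simp add: le_nat_floor less_Suc_eq_le)
  moreover have "T \<in> {t - a - real (Suc k) * h <.. t - a - real k * h}"
    using k_le k_gt by (auto simp: algebra_simps)
  moreover have "X (Suc N) w > a + real k * h" using step k_le by (simp add: T_def)
  ultimately show ?thesis unfolding T_def by blast
qed

lemma (in prob_space) prob_gt_pos_level:
  fixes Y :: "'a \<Rightarrow> real"
  assumes [measurable]: "Y \<in> borel_measurable M" and pos: "prob {w\<in>space M. Y w > 0} > 0"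
  obtains h where "h > 0" "prob {w\<in>space M. Y w > h} > 0"
proof -
  define A where "A n = {w\<in>space M. Y w > 1 / Suc n}" for n
  have "{w\<in>space M. Y w > 0} = (\<Union>n. A n)"
  proof safe
    fix w assume "w \<in> space M" "Y w > 0"
    then obtain n where "inverse (real (Suc n)) < Y w" using reals_Archimedean by blast
    with \<open>w \<in> space M\<close> show "w \<in> (\<Union>n. A n)" by (auto simp: A_def inverse_eq_divide)
  qed (auto simp: A_def intro: order.strict_trans[rotated])
  have [measurable]: "A n \<in> sets M" for n unfolding A_def by measurable
  have "\<exists>n. prob (A n) \<noteq> 0"
  proof (rule ccontr)
    assume "\<nexists>n. prob (A n) \<noteq> 0"
    then have "(\<Union>n. A n) \<in> null_sets M" by (intro null_sets_UN) (auto simp: emeasure_eq_measure)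
    then have "prob (\<Union>n. A n) = 0" by (simp add: measure_def null_setsD1)
    with pos \<open>{w\<in>space M. Y w > 0} = (\<Union>n. A n)\<close> show False by simp
  qed
  then obtain n where "prob (A n) \<noteq> 0" ..
  then show thesis by (intro that[of "1 / Suc n"]) (auto simp: A_def less_le)
qed

lemma (in prob_space) expectation_exp_neg_lt_1:
  fixes Y :: "'a \<Rightarrow> real"
  assumes [measurable]: "Y \<in> borel_measurable M"
    and nonneg: "AE w in M. Y w \<ge> 0" and pos: "prob {w\<in>space M. Y w > 0} > 0"
  shows "expectation (\<lambda>w. exp (- Y w)) < 1"
proof -
  obtain h where h: "h > 0" "prob {w\<in>space M. Y w > h} > 0"
    using prob_gt_pos_level[OF _ pos] by auto
  define A where "A = {w\<in>space M. Y w > h}"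
  have A[measurable]: "A \<in> sets M" unfolding A_def by measurable
  define c where "c = 1 - exp (-h)"
  have "expectation (\<lambda>w. exp (- Y w)) \<le> expectation (\<lambda>w. 1 - c * indicator A w)"
  proof (rule integral_mono_AE)
    show "integrable M (\<lambda>w. exp (- Y w))"
      by (rule integrable_const_bound[where B=1]) (use nonneg in \<open>auto elim!: eventually_mono\<close>)
    show "integrable M (\<lambda>w. 1 - c * indicator A w)"
      by (auto intro!: integrable_real_indicator simp: less_top[symmetric])
    show "AE w in M. exp (- Y w) \<le> 1 - c * indicator A w"
      using nonneg by eventually_elim (auto simp: A_def c_def indicator_def)
  qed
  also have "\<dots> = 1 - c * prob A"
    by (subst Bochner_Integration.integral_diff)
       (auto intro!: integrable_real_indicator simp: less_top[symmetric] prob_space)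
  also have "\<dots> < 1" using h by (simp add: A_def c_def)
  finally show ?thesis .
qed

lemma (in prob_space) prob_eq_of_distr_eq:
  assumes "distr M borel X = distr M borel Z" "X \<in> borel_measurable M" "Z \<in> borel_measurable M"
    and "B \<in> sets borel"
  shows "prob {w\<in>space M. X w \<in> B} = prob {w\<in>space M. Z w \<in> B}"
proof -
  have "prob {w\<in>space M. V w \<in> B} = measure (distr M borel V) B" if "V \<in> borel_measurable M" for V
    using that \<open>B \<in> sets borel\<close> by (subst measure_distr) (auto intro!: arg_cong[where f=prob])
  from this[OF assms(2)] this[OF assms(3)] show ?thesis by (simp only: assms(1))
qed

lemma count_progression_below_le:
  fixes y a h :: real
  assumes "h > 0" "a \<ge> 1"
  shows "(\<Sum>k<K. if y > a + real k * h then 1 else 0) \<le> (1 / h + 1) * (if y > a then y else 0)"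
proof (cases "y > a")
  case False
  with assms have "\<not> y > a + real k * h" for k by (smt (verit) mult_nonneg_nonneg of_nat_0_le_iff)
  with False show ?thesis by simp
next
  case True
  have "{..<K} \<inter> {k. y > a + real k * h} \<subseteq> {..<nat \<lceil>(y - a) / h\<rceil>}"
  proof
    fix k assume "k \<in> {..<K} \<inter> {k. y > a + real k * h}"
    then have "real k < (y - a) / h" using \<open>h > 0\<close> by (simp add: field_simps)
    then show "k \<in> {..<nat \<lceil>(y - a) / h\<rceil>}" by (simp add: zless_nat_eq_int_zless less_ceiling_iff)
  qed
  then have "real (card ({..<K} \<inter> {k. y > a + real k * h})) \<le> real (nat \<lceil>(y - a) / h\<rceil>)"
    using card_mono[of "{..<nat \<lceil>(y - a) / h\<rceil>}"] by simp
  then have "(\<Sum>k<K. if y > a + real k * h then 1 else 0) \<le> real (nat \<lceil>(y - a) / h\<rceil>)"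
    by (simp add: sum.If_cases)
  also have "\<dots> \<le> (y - a) / h + 1"
  proof -
    have "(y - a) / h > 0" using True \<open>h > 0\<close> by simp
    then show ?thesis by simp
  qed
  also have "\<dots> \<le> (1 / h + 1) * y"
    using True assms divide_right_mono[of "y - a" y h] by (simp add: algebra_simps)
  finally show ?thesis using True by simp
qed

lemma (in prob_space) sum_prob_gt_progression_le:
  fixes Y :: "'a \<Rightarrow> real"
  assumes [measurable]: "Y \<in> borel_measurable M" and "integrable M Y" "h > 0" "a \<ge> 1"
  shows "(\<Sum>k<K. prob {w\<in>space M. Y w > a + real k * h})
     \<le> (1 / h + 1) * expectation (\<lambda>w. if Y w > a then Y w else 0)"
proof -
  define S where "S k = {w\<in>space M. Y w > a + real k * h}" for k
  have [measurable]: "S k \<in> sets M" for k unfolding S_def by measurable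
  have "(\<Sum>k<K. prob (S k)) = (\<Sum>k<K. expectation (indicator (S k)))"
    using sets.sets_into_space by (simp add: Int_absorb2)
  also have "\<dots> = expectation (\<lambda>w. \<Sum>k<K. indicator (S k) w)"
    by (rule Bochner_Integration.integral_sum[symmetric]) (simp add: emeasure_eq_measure)
  also have "\<dots> \<le> expectation (\<lambda>w. (1 / h + 1) * (if Y w > a then Y w else 0))"
  proof (rule integral_mono)
    show "integrable M (\<lambda>w. \<Sum>k<K. indicator (S k) w :: real)"
      by (simp add: emeasure_eq_measure)
    have "integrable M (\<lambda>w. if Y w > a then Y w else 0)"
      by (rule Bochner_Integration.integrable_bound[OF \<open>integrable M Y\<close>]) auto
    then show "integrable M (\<lambda>w. (1 / h + 1) * (if Y w > a then Y w else 0))" by simp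
    fix w assume "w \<in> space M"
    then have "(\<Sum>k<K. indicator (S k) w :: real) = (\<Sum>k<K. if Y w > a + real k * h then 1 else 0)"
      by (intro sum.cong) (auto simp: S_def)
    also have "\<dots> \<le> (1 / h + 1) * (if Y w > a then Y w else 0)"
      using assms by (intro count_progression_below_le)
    finally show "(\<Sum>k<K. indicator (S k) w :: real) \<le> (1 / h + 1) * (if Y w > a then Y w else 0)" .
  qed
  finally show ?thesis unfolding S_def by simp
qed

lemma (in prob_space) tail_expectation_tendsto_0:
  fixes Y :: "'a \<Rightarrow> real"
  assumes [measurable]: "Y \<in> borel_measurable M" and "integrable M Y"
  shows "((\<lambda>a. expectation (\<lambda>w. if Y w > a then Y w else 0)) \<longlongrightarrow> 0) at_top"
proof -
  have "((\<lambda>a. expectation (\<lambda>w. if Y w > a then Y w else 0)) \<longlongrightarrow> expectation (\<lambda>w. 0)) at_top"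
  proof (rule integral_dominated_convergence_at_top[where w="\<lambda>w. norm (Y w)"])
    show "AE w in M. ((\<lambda>a. if Y w > a then Y w else 0) \<longlongrightarrow> 0) at_top"
    proof (rule AE_I2)
      fix w
      have "\<forall>\<^sub>F a in at_top. (if Y w > a then Y w else 0) = 0"
        using eventually_ge_at_top[of "Y w"] by eventually_elim auto
      then show "((\<lambda>a. if Y w > a then Y w else 0) \<longlongrightarrow> 0) at_top" by (rule tendsto_eventually)
    qed
  qed (use \<open>integrable M Y\<close> in auto)
  then show ?thesis by simp
qed

section \<open>Outer probability bounds\<close>

text \<open>
  An upper bound on the outer probability of an event, up to null sets: the events involving
  the age and the counting functions are not known to be measurable.
\<close>
definition outer_prob_le :: "'a measure \<Rightarrow> ('a \<Rightarrow> bool) \<Rightarrow> real \<Rightarrow> bool" where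
  "outer_prob_le M P p \<longleftrightarrow> (\<exists>S\<in>sets M. (AE w in M. P w \<longrightarrow> w \<in> S) \<and> measure M S \<le> p)"

lemma outer_prob_le_measurable:
  "{w\<in>space M. P w} \<in> sets M \<Longrightarrow> measure M {w\<in>space M. P w} \<le> p \<Longrightarrow> outer_prob_le M P p"
  unfolding outer_prob_le_def by (intro bexI[of _ "{w\<in>space M. P w}"] conjI AE_I2) auto

lemma outer_prob_le_mono:
  "outer_prob_le M Q p \<Longrightarrow> (AE w in M. P w \<longrightarrow> Q w) \<Longrightarrow> outer_prob_le M P p"
  unfolding outer_prob_le_def by (auto elim: AE_mp)

lemma outer_prob_le_disj:
  assumes "outer_prob_le M P p" "outer_prob_le M Q q"
  shows "outer_prob_le M (\<lambda>w. P w \<or> Q w) (p + q)"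
proof -
  obtain S T where "S \<in> sets M" "T \<in> sets M" "measure M S \<le> p" "measure M T \<le> q"
    "AE w in M. P w \<longrightarrow> w \<in> S" "AE w in M. Q w \<longrightarrow> w \<in> T"
    using assms unfolding outer_prob_le_def by blast
  then show ?thesis unfolding outer_prob_le_def
    by (intro bexI[of _ "S \<union> T"]) (auto elim: AE_mp intro: order.trans[OF measure_Un_le])
qed

lemma (in finite_measure) measure_le_of_outer_prob_le:
  "outer_prob_le M P p \<Longrightarrow> measure M {w\<in>space M. P w} \<le> p"
  unfolding outer_prob_le_def by (auto intro: order.trans[OF finite_measure_mono_AE])

section \<open>Renewal processes\<close>

text \<open>The steps are indexed from 1; Y 0 plays no role.\<close>
locale renewal_process = prob_space +
  fixes Y :: "nat \<Rightarrow> 'a \<Rightarrow> real"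
  assumes measurable_step: "\<And>n. n \<ge> 1 \<Longrightarrow> Y n \<in> borel_measurable M"
    and indep_steps: "indep_vars (\<lambda>_. borel) Y {1..}"
    and distr_step: "\<And>n. n \<ge> 1 \<Longrightarrow> distr M borel (Y n) = distr M borel (Y 1)"
    and step_nonneg: "\<And>n. n \<ge> 1 \<Longrightarrow> AE w in M. Y n w \<ge> 0"
    and prob_step_pos: "prob {w\<in>space M. Y 1 w > 0} > 0"
begin

lemma measurable_step_1 [measurable]: "Y 1 \<in> borel_measurable M"
  and measurable_step_Suc [measurable]: "Y (Suc n) \<in> borel_measurable M"
  by (simp_all add: measurable_step)

lemma measurable_partial_sum [measurable]: "partial_sum Y n \<in> borel_measurable M"
  unfolding partial_sum_def[abs_def] by (intro borel_measurable_sum) (simp add: measurable_step)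

lemma AE_steps_nonneg: "AE w in M. \<forall>j\<ge>1. Y j w \<ge> 0"
  by (subst AE_all_countable) (auto intro: step_nonneg)

lemma prob_step_eq:
  "n \<ge> 1 \<Longrightarrow> B \<in> sets borel \<Longrightarrow> prob {w\<in>space M. Y n w \<in> B} = prob {w\<in>space M. Y 1 w \<in> B}"
  using distr_step measurable_step[of n] measurable_step_1 by (intro prob_eq_of_distr_eq)

lemma expectation_step_eq:
  fixes g :: "real \<Rightarrow> real"
  assumes "n \<ge> 1" "g \<in> borel_measurable borel"
  shows "expectation (\<lambda>w. g (Y n w)) = expectation (\<lambda>w. g (Y 1 w))"
proof -
  have "expectation (\<lambda>w. g (Y i w)) = integral\<^sup>L (distr M borel (Y i)) g" if "i \<ge> 1" for i
    using assms measurable_step[OF that] by (intro integral_distr[symmetric])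
  from this[OF \<open>n \<ge> 1\<close>] this[of 1] show ?thesis by (simp only: distr_step[OF \<open>n \<ge> 1\<close>] order.refl)
qed

lemma prob_partial_sum_and_step:
  assumes "J \<in> sets borel" "B \<in> sets borel"
  shows "prob {w\<in>space M. partial_sum Y n w \<in> J \<and> Y (Suc n) w \<in> B}
       = prob {w\<in>space M. partial_sum Y n w \<in> J} * prob {w\<in>space M. Y 1 w \<in> B}"
proof -
  have "indep_vars (\<lambda>_. borel) Y (insert (Suc n) {1..n})"
    by (rule indep_vars_subset[OF indep_steps]) auto
  from indep_vars_sum[OF _ _ this]
  have "indep_var borel (Y (Suc n)) borel (partial_sum Y n)"
    unfolding partial_sum_def[abs_def] by simp
  from indep_varD[OF this, of B J] assms
  have "prob {w\<in>space M. Y (Suc n) w \<in> B \<and> partial_sum Y n w \<in> J}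
      = prob {w\<in>space M. Y (Suc n) w \<in> B} * prob {w\<in>space M. partial_sum Y n w \<in> J}"
    by (simp add: vimage_def Int_def conj_commute)
  then show ?thesis using prob_step_eq[of "Suc n" B] assms by (simp add: conj_commute)
qed

text \<open>Chernoff bound, via Markov's inequality for the product of the independent e^{-Y_i}.\<close>
lemma prob_partial_sum_le_exp:
  "prob {w\<in>space M. partial_sum Y m w \<le> s} \<le> exp s * expectation (\<lambda>w. exp (- Y 1 w)) ^ m"
proof -
  define Z where "Z i w = exp (- Y i w)" for i w
  have [measurable]: "Z i \<in> borel_measurable M" if "i \<ge> 1" for i
    unfolding Z_def[abs_def] using measurable_step[OF that] by measurable
  have "integrable M (Z i)" if "i \<ge> 1" for i
    by (rule integrable_const_bound[where B=1])
       (use step_nonneg[OF that] that in \<open>auto simp: Z_def elim!: eventually_mono\<close>)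
  moreover have "indep_vars (\<lambda>_. borel) Z {1..m}"
    unfolding Z_def[abs_def]
    by (rule indep_vars_subset[OF indep_vars_compose2[OF indep_steps]]) auto
  ultimately have "integrable M (\<lambda>w. \<Prod>i\<in>{1..m}. Z i w)"
    and "expectation (\<lambda>w. \<Prod>i\<in>{1..m}. Z i w) = (\<Prod>i\<in>{1..m}. expectation (Z i))"
    by (auto intro!: indep_vars_integrable indep_vars_lebesgue_integral)
  moreover have "(\<Prod>i\<in>{1..m}. expectation (Z i)) = expectation (Z 1) ^ m"
  proof -
    have "expectation (Z i) = expectation (Z 1)" if "i \<in> {1..m}" for i
      using that expectation_step_eq[of i "\<lambda>x. exp (- x)"] by (simp add: Z_def[abs_def])
    then have "(\<Prod>i\<in>{1..m}. expectation (Z i)) = (\<Prod>i\<in>{1..m}. expectation (Z 1))"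
      by (rule prod.cong[OF refl])
    then show ?thesis by simp
  qed
  moreover have "exp (- partial_sum Y m w) = (\<Prod>i\<in>{1..m}. Z i w)" for w
    unfolding partial_sum_def Z_def by (simp add: exp_sum[symmetric] sum_negf)
  ultimately have "prob {w\<in>space M. exp (- s) \<le> exp (- partial_sum Y m w)}
      \<le> expectation (Z 1) ^ m / exp (- s)"
    using integral_Markov_inequality_measure[where u="\<lambda>w. \<Prod>i\<in>{1..m}. Z i w" and A="space M"
        and c="exp (- s)" and M=M]
    by (simp add: Z_def prod_nonneg)
  then have "prob {w\<in>space M. partial_sum Y m w \<le> s} \<le> exp s * expectation (Z 1) ^ m"
    by (simp add: exp_minus field_simps)
  then show ?thesis unfolding Z_def[abs_def] by simp
qed

lemma partial_sum_linear_growth: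
  obtains c \<rho> where "c > 0" "0 \<le> \<rho>" "\<rho> < 1"
    "\<And>m. prob {w\<in>space M. partial_sum Y m w \<le> c * real m} \<le> \<rho> ^ m"
proof -
  define q where "q = expectation (\<lambda>w. exp (- Y 1 w))"
  have "q < 1"
    unfolding q_def by (rule expectation_exp_neg_lt_1[OF _ step_nonneg prob_step_pos]) simp_all
  have "q \<ge> 0" unfolding q_def by simp
  \<comment> \<open>Choose e^c halfway between 1 and 1/q, so that \<rho> = e^c q = 2q/(1+q) < 1.\<close>
  define c where "c = ln (2 / (1 + q))"
  have exp_c: "exp c = 2 / (1 + q)" using \<open>q \<ge> 0\<close> by (simp add: c_def)
  show thesis
  proof (rule that)
    show "c > 0" using \<open>q \<ge> 0\<close> \<open>q < 1\<close> by (simp add: c_def)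
    show "exp c * q < 1" "0 \<le> exp c * q"
      using \<open>q \<ge> 0\<close> \<open>q < 1\<close> by (simp_all add: exp_c field_simps)
    show "prob {w\<in>space M. partial_sum Y m w \<le> c * real m} \<le> (exp c * q) ^ m" for m
      using prob_partial_sum_le_exp[of m "c * real m"]
      by (simp add: q_def power_mult_distrib mult.commute[of c] exp_of_nat_mult)
  qed
qed

lemma AE_partial_sum_gt: "AE w in M. \<exists>j. partial_sum Y j w > t"
proof -
  obtain c \<rho> where "c > 0" "0 \<le> \<rho>" "\<rho> < 1"
    and bound: "\<And>m. prob {w\<in>space M. partial_sum Y m w \<le> c * real m} \<le> \<rho> ^ m"
    by (rule partial_sum_linear_growth) blast
  define H where "H = {w\<in>space M. \<forall>j. partial_sum Y j w \<le> t}"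
  have H_le: "prob H \<le> \<rho> ^ m" if "c * real m \<ge> t" for m
  proof -
    have "H \<subseteq> {w\<in>space M. partial_sum Y m w \<le> c * real m}"
      using that by (auto simp: H_def intro: order.trans)
    then show ?thesis by (intro order.trans[OF finite_measure_mono bound]) auto
  qed
  have "eventually (\<lambda>m. c * real m \<ge> t) sequentially"
    using filterlim_tendsto_pos_mult_at_top[OF tendsto_const \<open>c > 0\<close> filterlim_real_sequentially]
    by (simp add: filterlim_at_top)
  then have "prob H \<le> 0"
    using LIMSEQ_power_zero[of \<rho>] \<open>\<rho> < 1\<close> \<open>0 \<le> \<rho>\<close>
    by (intro tendsto_lowerbound[where F=sequentially]) (auto elim!: eventually_mono intro: H_le)
  moreover have "H \<in> sets M" unfolding H_def by measurable
  ultimately have "H \<in> null_sets M"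
    by (intro null_setsI) (simp_all add: emeasure_eq_measure measure_le_0_iff)
  then show ?thesis
    by (rule AE_I') (auto simp: H_def not_less)
qed

lemma AE_partial_sum_le_of_less_lower_count:
  "AE w in M. \<forall>s m. m < lower_count Y s w \<longrightarrow> partial_sum Y m w \<le> s"
  using AE_steps_nonneg by eventually_elim (auto intro!: partial_sum_le_of_less_lower_count)

lemma exists_step_level: obtains h where "h > 0" "prob {w\<in>space M. Y 1 w \<le> h} < 1"
proof -
  obtain h where "h > 0" "prob {w\<in>space M. Y 1 w > h} > 0"
    using prob_gt_pos_level[OF _ prob_step_pos] by auto
  moreover have "{w\<in>space M. Y 1 w \<le> h} = space M - {w\<in>space M. Y 1 w > h}" by auto
  then have "prob {w\<in>space M. Y 1 w \<le> h} = 1 - prob {w\<in>space M. Y 1 w > h}"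
    by (simp add: prob_compl)
  ultimately show thesis by (intro that[of h]) auto
qed

text \<open>
  Each epoch in the window is followed by a step \<le> h with probability r = P(Y_1 \<le> h), and at
  most one epoch in the window is followed by a step > h, which leaves it.
\<close>
lemma sum_prob_partial_sum_window_le:
  assumes r: "prob {w\<in>space M. Y 1 w \<le> h} < 1"
  shows "(\<Sum>n<N. prob {w\<in>space M. partial_sum Y n w \<in> {x<..x+h}})
    \<le> 1 / (1 - prob {w\<in>space M. Y 1 w \<le> h})"
proof -
  define r where "r = prob {w\<in>space M. Y 1 w \<le> h}"
  define E where "E n = {w\<in>space M. partial_sum Y n w \<in> {x<..x+h}}" for n
  define F where "F n = {w\<in>space M. partial_sum Y n w \<in> {x<..x+h} \<and> Y (Suc n) w > h}" for n
  have [measurable]: "E n \<in> sets M" "F n \<in> sets M" for n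
    unfolding E_def F_def by measurable
  have E_split: "prob (E n) = prob (F n) + r * prob (E n)" for n
  proof -
    define E' where "E' = {w\<in>space M. partial_sum Y n w \<in> {x<..x+h} \<and> Y (Suc n) w \<in> {..h}}"
    have [measurable]: "E' \<in> sets M" unfolding E'_def by measurable
    have "E n = F n \<union> E'" "F n \<inter> E' = {}" by (auto simp: E_def F_def E'_def)
    then have "prob (E n) = prob (F n) + prob E'" by (simp add: finite_measure_Union)
    moreover have "prob E' = r * prob (E n)"
      using prob_partial_sum_and_step[of "{x<..x+h}" "{..h}" n]
      by (simp add: E'_def E_def r_def mult.commute)
    ultimately show ?thesis by simp
  qed
  have leaves: "w \<notin> F n'" if "n < n'" "w \<in> F n" "\<forall>j\<ge>1. Y j w \<ge> 0" for n n' w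
    using partial_sum_mono[of Y w "Suc n" n'] that by (auto simp: F_def partial_sum_Suc)
  have "pairwise (\<lambda>n n'. AE w in M. w \<notin> F n \<or> w \<notin> F n') {..<N}"
    unfolding pairwise_def using AE_steps_nonneg
    by (auto elim!: eventually_mono dest: leaves simp: neq_iff)
  then have "(\<Sum>n<N. prob (F n)) = prob (\<Union>n<N. F n)"
    by (intro measure_UNION_AE[symmetric]) (auto simp: fmeasurable_def emeasure_eq_measure)
  also have "\<dots> \<le> 1" by simp
  finally have F_le: "(\<Sum>n<N. prob (F n)) \<le> 1" .
  have "(\<Sum>n<N. prob (E n)) = (\<Sum>n<N. prob (F n) + r * prob (E n))"
    by (rule sum.cong[OF refl E_split])
  also have "\<dots> = (\<Sum>n<N. prob (F n)) + r * (\<Sum>n<N. prob (E n))"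
    by (simp add: sum.distrib sum_distrib_left)
  finally have "(\<Sum>n<N. prob (E n)) * (1 - r) \<le> 1"
    using F_le by (simp add: algebra_simps)
  moreover have "1 - r > 0" using r by (simp add: r_def)
  ultimately show ?thesis by (simp add: E_def r_def field_simps)
qed

lemma prob_long_step_le:
  assumes "integrable M (Y 1)" "h > 0" and r: "prob {w\<in>space M. Y 1 w \<le> h} < 1" and "a \<ge> 1"
  shows "prob (\<Union>n. \<Union>k<K. {w\<in>space M.
      partial_sum Y n w \<in> {t - a - real (Suc k) * h <.. t - a - real k * h} \<and>
      Y (Suc n) w > a + real k * h})
    \<le> 1 / (1 - prob {w\<in>space M. Y 1 w \<le> h})
       * ((1 / h + 1) * expectation (\<lambda>w. if Y 1 w > a then Y 1 w else 0))"
    (is "prob (\<Union>n. ?A n) \<le> ?L")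
proof -
  define W where "W k = {t - a - real (Suc k) * h <.. t - a - real k * h}" for k
  define p where "p k = prob {w\<in>space M. Y 1 w > a + real k * h}" for k
  have W_eq: "W k = {t - a - real (Suc k) * h <.. t - a - real (Suc k) * h + h}" for k
    by (simp add: W_def algebra_simps)
  have [measurable]: "?A n \<in> sets M" for n by measurable
  have partial_sums: "(\<Sum>n<N. prob (?A n)) \<le> ?L" for N
  proof -
    have "(\<Sum>n<N. prob (?A n))
        \<le> (\<Sum>n<N. \<Sum>k<K. prob {w\<in>space M. partial_sum Y n w \<in> W k} * p k)"
      using prob_partial_sum_and_step[of "W _" "{a + real _ * h<..}"]
      by (intro sum_mono order.trans[OF measure_UNION_le]) (auto simp: W_def p_def)
    also have "\<dots> = (\<Sum>k<K. p k * (\<Sum>n<N. prob {w\<in>space M. partial_sum Y n w \<in> W k}))"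
      by (subst sum.swap) (simp add: sum_distrib_left mult.commute)
    also have "\<dots> \<le> (\<Sum>k<K. p k * (1 / (1 - prob {w\<in>space M. Y 1 w \<le> h})))"
      unfolding W_eq
      by (intro sum_mono mult_left_mono sum_prob_partial_sum_window_le[OF r]) (simp add: p_def)
    also have "\<dots> = 1 / (1 - prob {w\<in>space M. Y 1 w \<le> h}) * (\<Sum>k<K. p k)"
      by (simp add: sum_distrib_left mult.commute sum_divide_distrib)
    also have "\<dots> \<le> ?L"
      unfolding p_def using r
      by (intro mult_left_mono sum_prob_gt_progression_le[OF measurable_step_1 assms(1,2,4)]) simp
    finally show ?thesis .
  qed
  then have "(\<Sum>n\<le>N. prob (?A n)) \<le> ?L" for N by (simp only: lessThan_Suc_atMost[symmetric])
  then have summable: "summable (\<lambda>n. prob (?A n))" by (intro bounded_imp_summable) auto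
  have "prob (\<Union>n. ?A n) \<le> (\<Sum>n. prob (?A n))"
    by (rule finite_measure_subadditive_countably[OF _ summable]) auto
  also have "\<dots> \<le> ?L" by (rule suminf_le_const[OF summable partial_sums])
  finally show ?thesis .
qed

lemma renewal_age_tight:
  assumes "integrable M (Y 1)"
  obtains L where "(L \<longlongrightarrow> 0) at_top"
    "\<And>t a. t \<ge> 0 \<Longrightarrow> a \<ge> 1 \<Longrightarrow> outer_prob_le M (\<lambda>w. renewal_age Y t w > a) (L a)"
proof -
  obtain h where "h > 0" and r: "prob {w\<in>space M. Y 1 w \<le> h} < 1"
    by (rule exists_step_level)
  define L where "L a = 1 / (1 - prob {w\<in>space M. Y 1 w \<le> h})
       * ((1 / h + 1) * expectation (\<lambda>w. if Y 1 w > a then Y 1 w else 0))" for a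
  show thesis
  proof (rule that)
    show "(L \<longlongrightarrow> 0) at_top"
      unfolding L_def by (intro tendsto_mult_right_zero tail_expectation_tendsto_0 assms) simp
    fix t a :: real assume "t \<ge> 0" "a \<ge> 1"
    define S where "S = (\<Union>n. \<Union>k<nat \<lfloor>t / h\<rfloor> + 1. {w\<in>space M.
      partial_sum Y n w \<in> {t - a - real (Suc k) * h <.. t - a - real k * h} \<and>
      Y (Suc n) w > a + real k * h})"
    have "S \<in> sets M" unfolding S_def by measurable
    moreover have "prob S \<le> L a"
      unfolding S_def L_def by (rule prob_long_step_le[OF assms \<open>h > 0\<close> r \<open>a \<ge> 1\<close>])
    moreover have "AE w in M. renewal_age Y t w > a \<longrightarrow> w \<in> S"
      using AE_steps_nonneg AE_partial_sum_gt[of t] AE_space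
    proof eventually_elim
      case (elim w)
      then show ?case
        using renewal_age_gt_imp_long_step[of Y w t a h] \<open>t \<ge> 0\<close> \<open>a \<ge> 1\<close> \<open>h > 0\<close>
        by (auto simp: S_def)
    qed
    ultimately show "outer_prob_le M (\<lambda>w. renewal_age Y t w > a) (L a)"
      unfolding outer_prob_le_def by blast
  qed
qed

end

lemma (in prob_space) renewal_processI_nonneg:
  assumes "\<And>n. n \<ge> 1 \<Longrightarrow> Y n \<in> borel_measurable M"
    and "indep_vars (\<lambda>_. borel) Y {1..}"
    and "\<And>n. n \<ge> 1 \<Longrightarrow> distr M borel (Y n) = distr M borel (Y 1)"
    and nonneg: "\<And>n. n \<ge> 1 \<Longrightarrow> AE w in M. Y n w \<ge> 0"
    and nondeg: "prob {w\<in>space M. Y 1 w = 0} < 1"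
  shows "renewal_process M Y"
proof unfold_locales
  have [measurable]: "Y 1 \<in> borel_measurable M" using assms(1) by simp
  have "{w\<in>space M. Y 1 w \<ge> 0} \<in> sets M" by measurable
  then have "prob {w\<in>space M. Y 1 w \<ge> 0} = 1"
    using nonneg[of 1] by (subst prob_eq_1) (auto elim!: eventually_mono)
  moreover have "prob {w\<in>space M. Y 1 w \<ge> 0}
      = prob {w\<in>space M. Y 1 w > 0} + prob {w\<in>space M. Y 1 w = 0}"
  proof -
    have "{w\<in>space M. Y 1 w > 0} \<in> sets M" "{w\<in>space M. Y 1 w = 0} \<in> sets M" by measurable
    moreover have "{w\<in>space M. Y 1 w \<ge> 0} = {w\<in>space M. Y 1 w > 0} \<union> {w\<in>space M. Y 1 w = 0}"
      and "{w\<in>space M. Y 1 w > 0} \<inter> {w\<in>space M. Y 1 w = 0} = {}" by auto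
    ultimately show ?thesis by (simp add: finite_measure_Union)
  qed
  ultimately show "prob {w\<in>space M. Y 1 w > 0} > 0" using nondeg by simp
qed (fact assms)+

lemma (in prob_space) renewal_processI_pos:
  assumes "\<And>n. n \<ge> 1 \<Longrightarrow> Y n \<in> borel_measurable M"
    and "indep_vars (\<lambda>_. borel) Y {1..}"
    and "\<And>n. n \<ge> 1 \<Longrightarrow> distr M borel (Y n) = distr M borel (Y 1)"
    and pos: "prob {w\<in>space M. Y 1 w > 0} = 1"
  shows "renewal_process M Y"
proof unfold_locales
  fix n :: nat assume "n \<ge> 1"
  have "prob {w\<in>space M. Y n w \<in> {0<..}} = prob {w\<in>space M. Y 1 w \<in> {0<..}}"
    using assms(1)[OF \<open>n \<ge> 1\<close>] assms(1)[of 1] assms(3)[OF \<open>n \<ge> 1\<close>]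
    by (intro prob_eq_of_distr_eq) simp_all
  with pos have "AE w in M. w \<in> {w\<in>space M. Y n w > 0}"
    by (intro AE_prob_1) simp
  then show "AE w in M. Y n w \<ge> 0" by (auto elim!: eventually_mono)
next
  show "prob {w\<in>space M. Y 1 w > 0} > 0" using pos by simp
qed (fact assms)+

lemma lower_count_renewal_age_tight:
  assumes "renewal_process M X" "renewal_process M C" "integrable M (X 1)"
  obtains K :: "nat \<Rightarrow> real" where "K \<longlonglongrightarrow> 0"
    "\<forall>\<^sub>F m in sequentially. \<forall>t\<ge>0.
       outer_prob_le M (\<lambda>w. m < lower_count C (renewal_age X t w) w) (K m)"
proof -
  interpret X: renewal_process M X by fact
  interpret C: renewal_process M C by fact
  obtain L where L: "(L \<longlongrightarrow> 0) at_top"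
    and age: "\<And>t a. t \<ge> 0 \<Longrightarrow> a \<ge> 1 \<Longrightarrow> outer_prob_le M (\<lambda>w. renewal_age X t w > a) (L a)"
    using X.renewal_age_tight[OF assms(3)] by blast
  obtain c \<rho> where "c > 0" "0 \<le> \<rho>" "\<rho> < 1"
    and linear: "\<And>m. measure M {w\<in>space M. partial_sum C m w \<le> c * real m} \<le> \<rho> ^ m"
    by (rule C.partial_sum_linear_growth) blast
  have cm: "filterlim (\<lambda>m. c * real m) at_top sequentially"
    by (rule filterlim_tendsto_pos_mult_at_top[OF tendsto_const \<open>c > 0\<close> filterlim_real_sequentially])
  show thesis
  proof (rule that)
    show "(\<lambda>m. L (c * real m) + \<rho> ^ m) \<longlonglongrightarrow> 0"
      using filterlim_compose[OF L cm] LIMSEQ_power_zero[of \<rho>] \<open>0 \<le> \<rho>\<close> \<open>\<rho> < 1\<close>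
      by (auto intro: tendsto_add_zero)
    show "\<forall>\<^sub>F m in sequentially. \<forall>t\<ge>0.
      outer_prob_le M (\<lambda>w. m < lower_count C (renewal_age X t w) w) (L (c * real m) + \<rho> ^ m)"
      using cm[unfolded filterlim_at_top, rule_format, of 1]
    proof eventually_elim
      case (elim m)
      show ?case
      proof (intro allI impI)
        fix t :: real assume "t \<ge> 0"
        have "outer_prob_le M (\<lambda>w. partial_sum C m w \<le> c * real m) (\<rho> ^ m)"
          by (rule outer_prob_le_measurable[OF _ linear]) measurable
        with age[OF \<open>t \<ge> 0\<close> elim]
        have "outer_prob_le M (\<lambda>w. c * real m < renewal_age X t w \<or> partial_sum C m w \<le> c * real m)
            (L (c * real m) + \<rho> ^ m)"
          by (rule outer_prob_le_disj)
        then show "outer_prob_le M (\<lambda>w. m < lower_count C (renewal_age X t w) w)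
            (L (c * real m) + \<rho> ^ m)"
          by (rule outer_prob_le_mono, use C.AE_partial_sum_le_of_less_lower_count in eventually_elim)
             (meson not_less order.trans)
      qed
    qed
  qed
qed

lemma (in prob_space) tendsto_prob_div_sqrt_0:
  fixes Z :: "real \<Rightarrow> 'a \<Rightarrow> nat" and K :: "nat \<Rightarrow> real"
  assumes "K \<longlonglongrightarrow> 0" and tight: "\<forall>\<^sub>F m in sequentially. \<forall>t\<ge>0. outer_prob_le M (\<lambda>w. m < Z t w) (K m)"
  shows "\<forall>\<epsilon>>0. ((\<lambda>t. prob {w\<in>space M. \<bar>real (Z t w) / sqrt t\<bar> > \<epsilon>}) \<longlongrightarrow> 0) at_top"
proof (intro allI impI)
  fix \<epsilon> :: real assume "\<epsilon> > 0"
  define m where "m t = nat \<lfloor>\<epsilon> * sqrt t\<rfloor>" for t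
  have "filterlim (\<lambda>t. \<epsilon> * sqrt t) at_top at_top"
    by (rule filterlim_tendsto_pos_mult_at_top[OF tendsto_const \<open>\<epsilon> > 0\<close> sqrt_at_top])
  then have "filterlim (\<lambda>t. \<lfloor>\<epsilon> * sqrt t\<rfloor>) at_top at_top"
    by (rule filterlim_compose[OF filterlim_floor_sequentially])
  then have m: "filterlim m at_top at_top"
    unfolding m_def by (rule filterlim_compose[OF filterlim_nat_sequentially])
  have bound: "\<forall>\<^sub>F t in at_top. prob {w\<in>space M. \<bar>real (Z t w) / sqrt t\<bar> > \<epsilon>} \<le> K (m t)"
    using filterlim_iff[THEN iffD1, OF m, rule_format, OF tight] eventually_gt_at_top[of 0]
  proof eventually_elim
    case (elim t)
    have "m t < Z t w" if "\<bar>real (Z t w) / sqrt t\<bar> > \<epsilon>" for w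
    proof -
      have "\<epsilon> * sqrt t < real (Z t w)" using that elim(2) by (simp add: pos_less_divide_eq)
      moreover have "real (m t) \<le> \<epsilon> * sqrt t" using \<open>\<epsilon> > 0\<close> elim(2) by (simp add: m_def)
      ultimately show ?thesis by simp
    qed
    moreover have "outer_prob_le M (\<lambda>w. m t < Z t w) (K (m t))" using elim by simp
    ultimately have "outer_prob_le M (\<lambda>w. \<bar>real (Z t w) / sqrt t\<bar> > \<epsilon>) (K (m t))"
      by (auto intro: outer_prob_le_mono)
    then show ?case by (rule measure_le_of_outer_prob_le)
  qed
  have "((\<lambda>t. K (m t)) \<longlongrightarrow> 0) at_top" by (rule filterlim_compose[OF assms(1) m])
  then show "((\<lambda>t. prob {w\<in>space M. \<bar>real (Z t w) / sqrt t\<bar> > \<epsilon>}) \<longlongrightarrow> 0) at_top"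
    by (intro tendsto_sandwich[OF _ bound tendsto_const]) simp_all
qed

theorem mainTheorem2:
  fixes M :: "'a measure" and X C :: "nat \<Rightarrow> 'a \<Rightarrow> real"
  assumes "prob_space M"
    and X_rv: "\<And>n. n \<ge> 1 \<Longrightarrow> X n \<in> borel_measurable M"
    and X_indep: "prob_space.indep_vars M (\<lambda>_. borel) X {1..}"
    and X_id: "\<And>n. n \<ge> 1 \<Longrightarrow> distr M borel (X n) = distr M borel (X 1)"
    and X_nonneg: "\<And>n. n \<ge> 1 \<Longrightarrow> AE \<omega> in M. X n \<omega> \<ge> 0"
    and X_nondeg: "measure M {\<omega> \<in> space M. X 1 \<omega> = 0} < 1"
    and X_int: "integrable M (X 1)"
    and C_rv: "\<And>n. n \<ge> 1 \<Longrightarrow> C n \<in> borel_measurable M"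
    and C_indep: "prob_space.indep_vars M (\<lambda>_. borel) C {1..}"
    and C_id: "\<And>n. n \<ge> 1 \<Longrightarrow> distr M borel (C n) = distr M borel (C 1)"
    and C_pos: "measure M {\<omega> \<in> space M. C 1 \<omega> > 0} = 1"
    and C_sq: "integrable M (\<lambda>\<omega>. (C 1 \<omega>)\<^sup>2)"
  shows "\<forall>\<epsilon>>0. ((\<lambda>t. measure M {\<omega> \<in> space M.
            \<bar>real (lower_count C (renewal_age X t \<omega>) \<omega>) / sqrt t\<bar> > \<epsilon>}) \<longlongrightarrow> 0) at_top"
proof -
  interpret prob_space M by fact
  have "renewal_process M X"
    using X_rv X_indep X_id X_nonneg X_nondeg by (rule renewal_processI_nonneg)
  moreover have "renewal_process M C"
    using C_rv C_indep C_id C_pos by (rule renewal_processI_pos)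
  ultimately obtain K where "K \<longlonglongrightarrow> 0" and "\<forall>\<^sub>F m in sequentially. \<forall>t\<ge>0.
      outer_prob_le M (\<lambda>w. m < lower_count C (renewal_age X t w) w) (K m)"
    using X_int by (rule lower_count_renewal_age_tight)
  then show ?thesis by (rule tendsto_prob_div_sqrt_0)
qed

end
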